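(* For an even integer $n>1$ and an integer $m\geq 3$, $$\chi_{ld}(P_{m}[\overline{K_{n}}])\leq \begin{cases}3 &\text{if $m$ is odd,}\\ 4 &\text{if $m$ is even.}\end{cases}$$
   Context: All graphs are finite, simple and undirected. For a graph $G=(V,E)$ of order $N$ without isolated vertices, a bijection $f\colon V\to\{1,2,\dots,N\}$ is a local distance antimagic labeling if $w(u)\neq w(v)$ for every edge $uv$, where $w(u)=\sum_{x\in N(u)}f(x)$ and $N(u)$ is the open neighborhood of $u$. $\chi_{ld}(G)$ is the minimum number of distinct weights over all local distance antimagic labelings of $G$. $P_m$ is the path on $m$ vertices, $\overline{K_n}$ the edgeless graph on $n$ vertices. The lexicographic product $G[H]$ has vertex set $V(G)\times V(H)$, with $(g,h)$ adjacent to $(g',h')$ iff $gg'\in E(G)$, or $g=g'$ and $hh'\in E(H)$. *)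

theory Defs
  imports Main
begin

text \<open>A finite simple graph is given by a finite vertex set V and a symmetric,
irreflexive adjacency relation adj (only its restriction to V matters).\<close>

definition nbr_weight :: "'a set \<Rightarrow> ('a \<Rightarrow> 'a \<Rightarrow> bool) \<Rightarrow> ('a \<Rightarrow> nat) \<Rightarrow> 'a \<Rightarrow> nat" where
  "nbr_weight V adj f u = (\<Sum>x\<in>{x\<in>V. adj u x}. f x)"

definition local_distance_antimagic ::
  "'a set \<Rightarrow> ('a \<Rightarrow> 'a \<Rightarrow> bool) \<Rightarrow> ('a \<Rightarrow> nat) \<Rightarrow> bool" where
  "local_distance_antimagic V adj f \<longleftrightarrow>
     bij_betw f V {1..card V} \<and>
     (\<forall>u\<in>V. \<forall>v\<in>V. adj u v \<longrightarrow> nbr_weight V adj f u \<noteq> nbr_weight V adj f v)"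

definition chi_ld :: "'a set \<Rightarrow> ('a \<Rightarrow> 'a \<Rightarrow> bool) \<Rightarrow> nat" where
  "chi_ld V adj = (LEAST k. \<exists>f. local_distance_antimagic V adj f \<and>
                              card (nbr_weight V adj f ` V) = k)"

definition path_adj :: "nat \<Rightarrow> nat \<Rightarrow> bool" where
  "path_adj i j \<longleftrightarrow> i = j + 1 \<or> j = i + 1"

text \<open>Lexicographic product P_m[complement K_n]: vertices (i,j), i<m, j<n;
(i,j) ~ (i',j') iff i ~ i' in P_m (the factor edgeless graph contributes no edges).\<close>
definition lexprod_verts :: "nat \<Rightarrow> nat \<Rightarrow> (nat \<times> nat) set" where
  "lexprod_verts m n = {0..<m} \<times> {0..<n}"

definition lex_product :: "('a \<Rightarrow> 'a \<Rightarrow> bool) \<Rightarrow> ('b \<Rightarrow> 'b \<Rightarrow> bool) \<Rightarrow> ('a \<times> 'b) \<Rightarrow> ('a \<times> 'b) \<Rightarrow> bool" where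
  "lex_product adjG adjH p q \<longleftrightarrow> adjG (fst p) (fst q) \<or> (fst p = fst q \<and> adjH (snd p) (snd q))"

definition edgeless_adj :: "nat \<Rightarrow> nat \<Rightarrow> bool" where
  "edgeless_adj i j \<longleftrightarrow> False"

definition lexprod_adj :: "(nat \<times> nat) \<Rightarrow> (nat \<times> nat) \<Rightarrow> bool" where
  "lexprod_adj = lex_product path_adj edgeless_adj"

end

theory Submission
  imports Defs
begin

(*
  Give vertex (i, j) of P_m[complement K_n] (path position i, copy j) the label j m + \<sigma>_j(i) + 1,
  where every \<sigma>_j permutes {0..<m}.  The weight of (i, j) is the sum of the row sums of the
  path neighbours of i.  Beyond the first two columns, the columns come in pairs carrying the
  identity and the reversal i \<mapsto> m - 1 - i, so each pair adds m - 1 to every row sum; hence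
  row i sums to K + \<sigma>_0(i) + \<sigma>_1(i) for a constant K \<ge> m + 2.  Choose \<sigma>_0, \<sigma>_1 with
  \<sigma>_0(i) + \<sigma>_1(i) = A for even i and = B for odd i, where A < B \<le> m + 2A.  Then inner rows get
  weight 2K + 2B or 2K + 2A according to their parity, row 0 gets K + B and row m - 1 gets
  K + A or K + B according to the parity of m (for odd m it repeats the weight of row 0), and
  adjacent rows always get different weights.
*)

lemma chi_ld_le_card_weights:
  assumes "local_distance_antimagic V adj f"
  shows "chi_ld V adj \<le> card (nbr_weight V adj f ` V)"
  unfolding chi_ld_def by (rule Least_le) (use assms in blast)

lemma nbr_weight_lex_product_edgeless:
  "nbr_weight (A \<times> B) (lex_product adj edgeless_adj) f (i, j) =
     (\<Sum>i'\<in>{i'\<in>A. adj i i'}. \<Sum>j'\<in>B. f (i', j'))"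
proof -
  have "{x \<in> A \<times> B. lex_product adj edgeless_adj (i, j) x} = {i'\<in>A. adj i i'} \<times> B"
    by (auto simp: lex_product_def edgeless_adj_def)
  then show ?thesis
    by (simp add: nbr_weight_def sum.cartesian_product)
qed

definition path_nbr_sum :: "nat \<Rightarrow> (nat \<Rightarrow> nat) \<Rightarrow> nat \<Rightarrow> nat" where
  "path_nbr_sum m g i = (\<Sum>i'\<in>{i'\<in>{..<m}. path_adj i i'}. g i')"

lemma path_nbr_sum_eq:
  assumes "i < m"
  shows "path_nbr_sum m g i = (if 0 < i then g (i - 1) else 0) + (if i + 1 < m then g (i + 1) else 0)"
proof -
  have "{i'\<in>{..<m}. path_adj i i'} = (if 0 < i then {i - 1} else {}) \<union> (if i + 1 < m then {i + 1} else {})"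
    using assms by (auto simp: path_adj_def)
  then show ?thesis
    by (simp add: path_nbr_sum_def sum.union_disjoint)
qed

lemma path_nbr_sum_alternating:
  fixes S :: "nat \<Rightarrow> nat"
  assumes S: "\<And>i. i < m \<Longrightarrow> S i = K + (if even i then A else B)"
    and "2 \<le> m" and "i < m"
  shows "path_nbr_sum m S i =
    (if i = 0 then K + B
     else if i = m - 1 then K + (if even m then A else B)
     else if even i then 2 * K + 2 * B else 2 * K + 2 * A)"
  using assms by (auto simp: path_nbr_sum_eq S)

lemma path_nbr_sum_alternating_adjacent_ne:
  fixes S :: "nat \<Rightarrow> nat"
  assumes S: "\<And>i. i < m \<Longrightarrow> S i = K + (if even i then A else B)"
    and "3 \<le> m" and "A < B" and "B < K + 2 * A" and "i + 1 < m"
  shows "path_nbr_sum m S i \<noteq> path_nbr_sum m S (i + 1)"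
  using assms by (auto simp: path_nbr_sum_alternating[OF S])

lemma card_path_nbr_sum_alternating:
  fixes S :: "nat \<Rightarrow> nat"
  assumes S: "\<And>i. i < m \<Longrightarrow> S i = K + (if even i then A else B)" and "2 \<le> m"
  shows "card (path_nbr_sum m S ` {..<m}) \<le> (if odd m then 3 else 4)"
proof -
  have "path_nbr_sum m S ` {..<m} \<subseteq>
      {K + B, K + (if even m then A else B), 2 * K + 2 * B, 2 * K + 2 * A}"
    using assms by (auto simp: path_nbr_sum_alternating[OF S])
  then have "card (path_nbr_sum m S ` {..<m}) \<le>
      card {K + B, K + (if even m then A else B), 2 * K + 2 * B, 2 * K + 2 * A}"
    by (rule card_mono[rotated]) simp
  also have "\<dots> \<le> (if odd m then 3 else 4)"
    by (simp add: card_insert_if)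
  finally show ?thesis .
qed

lemma bij_betw_lessThan_if_left_inverse:
  fixes p q :: "nat \<Rightarrow> nat"
  assumes "\<And>i. i < m \<Longrightarrow> p i < m \<and> q (p i) = i"
  shows "bij_betw p {..<m} {..<m}"
proof -
  have "inj_on p {..<m}"
    by (rule inj_on_inverseI[of _ q]) (use assms in auto)
  moreover have "p ` {..<m} \<subseteq> {..<m}"
    using assms by auto
  ultimately show ?thesis
    using endo_inj_surj[of "{..<m}" p] by (simp add: bij_betw_def)
qed

definition block_labeling :: "nat \<Rightarrow> (nat \<Rightarrow> nat \<Rightarrow> nat) \<Rightarrow> nat \<times> nat \<Rightarrow> nat" where
  "block_labeling m \<sigma> = (\<lambda>(i, j). j * m + \<sigma> j i + 1)"

lemma bij_betw_block_labeling:
  assumes \<sigma>: "\<And>j. j < n \<Longrightarrow> bij_betw (\<sigma> j) {..<m} {..<m}"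
  shows "bij_betw (block_labeling m \<sigma>) ({..<m} \<times> {..<n}) {1..m * n}"
proof -
  have lt: "\<sigma> j i < m" if "i < m" "j < n" for i j
    using \<sigma>[OF that(2)] that(1) by (auto dest: bij_betw_apply)
  have inj: "inj_on (block_labeling m \<sigma>) ({..<m} \<times> {..<n})"
  proof (rule inj_onI, clarsimp)
    fix i j i' j'
    assume ij: "i < m" "j < n" "i' < m" "j' < n"
      and eq: "block_labeling m \<sigma> (i, j) = block_labeling m \<sigma> (i', j')"
    have "j = j'"
      using arg_cong[OF eq, of "\<lambda>v. (v - 1) div m"] lt[OF ij(1,2)] lt[OF ij(3,4)]
      by (simp add: block_labeling_def)
    moreover have "\<sigma> j i = \<sigma> j i'"
      using eq \<open>j = j'\<close> by (simp add: block_labeling_def)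
    ultimately show "i = i' \<and> j = j'"
      using \<sigma>[OF ij(2)] ij by (auto simp: bij_betw_def inj_on_def)
  qed
  have "block_labeling m \<sigma> (i, j) \<in> {1..m * n}" if "i < m" "j < n" for i j
  proof -
    have "\<sigma> j i < m"
      using that by (rule lt)
    moreover have "(j + 1) * m \<le> n * m"
      using \<open>j < n\<close> by (intro mult_right_mono) auto
    ultimately show ?thesis
      unfolding block_labeling_def by (simp add: algebra_simps)
  qed
  then have "block_labeling m \<sigma> ` ({..<m} \<times> {..<n}) \<subseteq> {1..m * n}"
    by auto
  with inj show ?thesis
    by (simp add: bij_betw_def card_subset_eq card_image card_cartesian_product)
qed

definition column_perm :: "nat \<Rightarrow> (nat \<Rightarrow> nat) \<Rightarrow> (nat \<Rightarrow> nat) \<Rightarrow> nat \<Rightarrow> nat \<Rightarrow> nat" where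
  "column_perm m p0 p1 j =
     (if j = 0 then p0 else if j = 1 then p1 else if even j then id else (\<lambda>i. m - 1 - i))"

lemma bij_betw_column_perm:
  assumes "bij_betw p0 {..<m} {..<m}" and "bij_betw p1 {..<m} {..<m}"
  shows "bij_betw (column_perm m p0 p1 j) {..<m} {..<m}"
proof -
  have "bij_betw (\<lambda>i. m - 1 - i) {..<m} {..<m}"
    by (rule bij_betw_lessThan_if_left_inverse[where q = "\<lambda>i. m - 1 - i"]) auto
  then show ?thesis
    using assms by (simp add: column_perm_def del: diff_diff_left)
qed

lemma sum_column_perm:
  assumes "1 \<le> h" and "i < m"
  shows "(\<Sum>j<2 * h. column_perm m p0 p1 j i) = p0 i + p1 i + (h - 1) * (m - 1)"
proof -
  obtain k where h: "h = Suc k"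
    using assms(1) by (cases h) auto
  have "(\<Sum>j<2 * h. column_perm m p0 p1 j i) =
      (\<Sum>q\<le>k. column_perm m p0 p1 (2 * q) i + column_perm m p0 p1 (Suc (2 * q)) i)"
    using sum.in_pairs_0[of "\<lambda>j. column_perm m p0 p1 j i" k]
    by (simp add: h lessThan_Suc_atMost)
  also have "\<dots> = p0 i + p1 i + (\<Sum>q<k. m - 1)"
    using assms(2) by (simp add: sum.atMost_shift column_perm_def)
  finally show ?thesis
    by (simp add: h)
qed

lemma local_distance_antimagic_lexprod_from_pair:
  assumes n: "n = 2 * h" "1 \<le> h" and m: "3 \<le> m"
    and p0: "bij_betw p0 {..<m} {..<m}" and p1: "bij_betw p1 {..<m} {..<m}"
    and sums: "\<And>i. i < m \<Longrightarrow> p0 i + p1 i = (if even i then A else B)"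
    and "A < B" and "B \<le> m + 2 * A"
  shows "\<exists>f. local_distance_antimagic (lexprod_verts m n) lexprod_adj f \<and>
    card (nbr_weight (lexprod_verts m n) lexprod_adj f ` lexprod_verts m n)
      \<le> (if odd m then 3 else 4)"
proof -
  define f where "f = block_labeling m (column_perm m p0 p1)"
  define S where "S i = (\<Sum>j<n. f (i, j))" for i
  define K where "K = (\<Sum>j<n. j * m + 1) + (h - 1) * (m - 1)"
  have V: "lexprod_verts m n = {..<m} \<times> {..<n}"
    by (auto simp: lexprod_verts_def)
  have weight: "nbr_weight (lexprod_verts m n) lexprod_adj f (i, j) = path_nbr_sum m S i" for i j
    by (simp add: V lexprod_adj_def nbr_weight_lex_product_edgeless path_nbr_sum_def S_def)
  have S: "S i = K + (if even i then A else B)" if "i < m" for i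
  proof -
    have "S i = (\<Sum>j<n. j * m + 1) + (\<Sum>j<n. column_perm m p0 p1 j i)"
      by (simp add: S_def f_def block_labeling_def flip: sum.distrib)
    then show ?thesis
      using sum_column_perm[OF n(2) that] sums[OF that] by (simp add: n(1) K_def)
  qed
  have "(\<Sum>j<2. j * m + 1) \<le> (\<Sum>j<n. j * m + 1)"
    using n by (intro sum_mono2) auto
  then have "m + 2 \<le> (\<Sum>j<n. j * m + 1)"
    by (simp add: numeral_2_eq_2)
  then have "B < K + 2 * A"
    using \<open>B \<le> m + 2 * A\<close> by (simp add: K_def)
  have "bij_betw f (lexprod_verts m n) {1..card (lexprod_verts m n)}"
    using bij_betw_block_labeling[of n "column_perm m p0 p1"] bij_betw_column_perm[OF p0 p1]
    by (simp add: V f_def card_cartesian_product)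
  moreover have "nbr_weight (lexprod_verts m n) lexprod_adj f u \<noteq>
      nbr_weight (lexprod_verts m n) lexprod_adj f v"
    if uv: "u \<in> lexprod_verts m n" "v \<in> lexprod_verts m n" "lexprod_adj u v" for u v
  proof -
    obtain i j i' j' where "u = (i, j)" "v = (i', j')" "i < m" "i' < m" "i' = i + 1 \<or> i = i' + 1"
      using uv by (auto simp: V lexprod_adj_def lex_product_def path_adj_def edgeless_adj_def)
    then show ?thesis
      using path_nbr_sum_alternating_adjacent_ne[OF S m \<open>A < B\<close> \<open>B < K + 2 * A\<close>]
      by (auto simp: weight dest: sym)
  qed
  moreover have "nbr_weight (lexprod_verts m n) lexprod_adj f ` lexprod_verts m n =
      path_nbr_sum m S ` {..<m}"
  proof -
    have "nbr_weight (lexprod_verts m n) lexprod_adj f = path_nbr_sum m S \<circ> fst"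
      by (auto simp: weight)
    moreover have "fst ` lexprod_verts m n = {..<m}"
      unfolding V using n by (simp add: lessThan_empty_iff)
    ultimately show ?thesis
      by (metis image_comp)
  qed
  moreover have "card (path_nbr_sum m S ` {..<m}) \<le> (if odd m then 3 else 4)"
    by (rule card_path_nbr_sum_alternating[where K = K and A = A and B = B]) (use S m in auto)
  ultimately show ?thesis
    unfolding local_distance_antimagic_def by (intro exI[of _ f]) auto
qed

lemma permutation_pair_alternating_sums:
  fixes m :: nat
  assumes "3 \<le> m"
  obtains p0 p1 :: "nat \<Rightarrow> nat" and A B :: nat
  where "bij_betw p0 {..<m} {..<m}" and "bij_betw p1 {..<m} {..<m}"
    and "\<And>i. i < m \<Longrightarrow> p0 i + p1 i = (if even i then A else B)"
    and "A < B" and "B \<le> m + 2 * A"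
proof (cases "even m")
  case True
  define p1 where "p1 i = (if even i then m - 2 - i else m - i)" for i :: nat
  have "bij_betw p1 {..<m} {..<m}"
    by (rule bij_betw_lessThan_if_left_inverse[where q = p1])
      (use True in \<open>auto simp: p1_def elim!: evenE oddE\<close>)
  moreover have "id i + p1 i = (if even i then m - 2 else m)" if "i < m" for i
    using that True by (auto simp: p1_def elim!: evenE oddE)
  ultimately show ?thesis
    using assms by (intro that[of id p1 "m - 2" m]) auto
next
  case False
  then obtain k where m: "m = 2 * k + 1"
    by (rule oddE)
  \<comment> \<open>p0 sends the even rows onto 0..k and the odd rows onto k+1..2k; p1 reverses both blocks.\<close>
  define p0 where "p0 i = (if even i then i div 2 else k + 1 + i div 2)" for i :: nat
  define p1 where "p1 i = (if even i then k - i div 2 else 2 * k - i div 2)" for i :: nat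
  have "bij_betw p0 {..<m} {..<m}"
    by (rule bij_betw_lessThan_if_left_inverse
        [where q = "\<lambda>x. if x \<le> k then 2 * x else 2 * (x - k - 1) + 1"])
      (auto simp: m p0_def elim!: evenE oddE)
  moreover have "bij_betw p1 {..<m} {..<m}"
    by (rule bij_betw_lessThan_if_left_inverse
        [where q = "\<lambda>x. if x \<le> k then 2 * (k - x) else 2 * (2 * k - x) + 1"])
      (auto simp: m p1_def elim!: evenE oddE)
  moreover have "p0 i + p1 i = (if even i then k else 3 * k + 1)" if "i < m" for i
    using that by (auto simp: m p0_def p1_def elim!: evenE oddE)
  ultimately show ?thesis
    using assms by (intro that[of p0 p1 k "3 * k + 1"]) (auto simp: m)
qed

theorem mainTheorem10:
  fixes m n :: nat
  assumes "even n" and "n > 1" and "m \<ge> 3"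
  shows "(\<exists>f. local_distance_antimagic (lexprod_verts m n) lexprod_adj f) \<and>
         chi_ld (lexprod_verts m n) lexprod_adj \<le> (if odd m then 3 else 4)"
proof -
  obtain h where n: "n = 2 * h" "1 \<le> h"
    using assms(1,2) by (auto elim!: evenE)
  obtain p0 p1 :: "nat \<Rightarrow> nat" and A B :: nat
    where "bij_betw p0 {..<m} {..<m}" "bij_betw p1 {..<m} {..<m}"
      "\<And>i. i < m \<Longrightarrow> p0 i + p1 i = (if even i then A else B)" "A < B" "B \<le> m + 2 * A"
    using permutation_pair_alternating_sums[OF assms(3)] by blast
  then obtain f where f: "local_distance_antimagic (lexprod_verts m n) lexprod_adj f"
    "card (nbr_weight (lexprod_verts m n) lexprod_adj f ` lexprod_verts m n)
      \<le> (if odd m then 3 else 4)"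
    using local_distance_antimagic_lexprod_from_pair[OF n assms(3)] by blast
  then show ?thesis
    using chi_ld_le_card_weights[OF f(1)] by auto
qed

end
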